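(* Let $\Delta'$, $\Delta''$ be edges (1-cells) of $\tilde K_b(\mathcal P,w)$. Then $\Delta'$ and $\Delta''$ are simple square equivalent if and only if either there is a maximal shaded transistor $T$ of $\Delta'$ such that $\Delta''$ is obtained from $\Delta'$ by removing $T$ and all of its bottom wires, or the same holds with the roles of $\Delta'$ and $\Delta''$ exchanged.
   Context: $\mathcal P=\langle\Sigma\mid\mathcal R\rangle$ is a semigroup presentation (no relation $(u,u)$), $w\in\Sigma^+$. Pictures over $\mathcal P$: frame, transistors and $\Sigma$-labelled wires, each wire from the bottom of a transistor or top of the frame to the top of a transistor or bottom of the frame, contacts ordered left to right, "$T_1<T_2$ if a wire runs from the bottom of $T_1$ to the top of $T_2$" generating a strict partial order, and each transistor's top/bottom words forming a relation of $\mathcal R$. Reduced: no dipole (pair $T_1<T_2$ with bottom contacts of $T_1$ joined in order to top contacts of $T_2$ and top label of $T_1$ = bottom label of $T_2$). $\tilde K_b(\mathcal P,w)$: vertices are reduced $(w,* )$-pictures modulo concatenation below by transistor-free pictures; an $n$-cube is such a picture with $n$ maximal transistors marked white (the other transistors are called shaded), its vertices obtained by keeping or deleting each white transistor together with its bottom wires; cubes glued along faces with equal labels. Thus an edge is a picture with exactly one white transistor. Two edges are simple square equivalent if they are opposite sides of a square (2-cube). *)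

theory Defs
  imports Main
begin

definition semigroup_presentation :: "('a list \<times> 'a list) set \<Rightarrow> bool" where
  "semigroup_presentation R \<longleftrightarrow> (\<forall>(u,v)\<in>R. u \<noteq> [] \<and> v \<noteq> [] \<and> u \<noteq> v)"

text \<open>Wire start points: top-frame contact i, or bottom contact j of transistor t.
Wire end points: top contact j of transistor t, or bottom-frame contact i.
Contacts are numbered from left to right starting at 0.\<close>
datatype src = FTop nat | TBot nat nat
datatype tgt = TTop nat nat | FBot nat

record 'a picture =
  ptop  :: "'a list"            \<comment> \<open>label of the top of the frame\<close>
  pbot  :: "'a list"            \<comment> \<open>label of the bottom of the frame\<close>
  trs   :: "nat set"
  trtop :: "nat \<Rightarrow> 'a list"
  trbot :: "nat \<Rightarrow> 'a list"
  link  :: "src \<Rightarrow> tgt"         \<comment> \<open>the wires: start contact \<mapsto> end contact\<close>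

definition srcs :: "'a picture \<Rightarrow> src set" where
  "srcs P = {FTop i | i. i < length (ptop P)} \<union>
            {TBot t j | t j. t \<in> trs P \<and> j < length (trbot P t)}"

definition tgts :: "'a picture \<Rightarrow> tgt set" where
  "tgts P = {TTop t j | t j. t \<in> trs P \<and> j < length (trtop P t)} \<union>
            {FBot i | i. i < length (pbot P)}"

fun slab :: "'a picture \<Rightarrow> src \<Rightarrow> 'a" where
  "slab P (FTop i) = ptop P ! i"
| "slab P (TBot t j) = trbot P t ! j"

fun tlab :: "'a picture \<Rightarrow> tgt \<Rightarrow> 'a" where
  "tlab P (TTop t j) = trtop P t ! j"
| "tlab P (FBot i) = pbot P ! i"

text \<open>Planarity with left-to-right ordered contacts and acyclicity: the picture can be
swept from top to bottom, applying the transistors one at a time, each one consuming a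
contiguous block of the current cut of wires (exactly its top wires, in order) and
replacing it by its bottom wires (in order).\<close>
fun runs :: "'a picture \<Rightarrow> nat list \<Rightarrow> src list \<Rightarrow> src list \<Rightarrow> bool" where
  "runs P [] c c' \<longleftrightarrow> c' = c"
| "runs P (t # ts) c c' \<longleftrightarrow>
     (\<exists>xs ys zs. c = xs @ ys @ zs \<and>
        map (link P) ys = map (TTop t) [0..<length (trtop P t)] \<and>
        runs P ts (xs @ map (TBot t) [0..<length (trbot P t)] @ zs) c')"

definition planar_realizable :: "'a picture \<Rightarrow> bool" where
  "planar_realizable P \<longleftrightarrow>
     (\<exists>ord c'. distinct ord \<and> set ord = trs P \<and>
        runs P ord (map FTop [0..<length (ptop P)]) c' \<and>
        map (link P) c' = map FBot [0..<length (pbot P)])"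

definition wf_picture :: "('a list \<times> 'a list) set \<Rightarrow> 'a picture \<Rightarrow> bool" where
  "wf_picture R P \<longleftrightarrow>
     finite (trs P) \<and>
     (\<forall>t\<in>trs P. (trtop P t, trbot P t) \<in> R \<or> (trbot P t, trtop P t) \<in> R) \<and>
     bij_betw (link P) (srcs P) (tgts P) \<and>
     (\<forall>s\<in>srcs P. tlab P (link P s) = slab P s) \<and>
     planar_realizable P"

text \<open>T1 < T2 if a wire runs from the bottom of T1 to the top of T2; the strict
partial order is its transitive closure.\<close>
definition prec :: "'a picture \<Rightarrow> (nat \<times> nat) set" where
  "prec P = {(t1, t2). t1 \<in> trs P \<and> t2 \<in> trs P \<and>
              (\<exists>j j'. j < length (trbot P t1) \<and> link P (TBot t1 j) = TTop t2 j')}"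

definition maximal_tr :: "'a picture \<Rightarrow> nat \<Rightarrow> bool" where
  "maximal_tr P T \<longleftrightarrow> T \<in> trs P \<and> \<not> (\<exists>T'. (T, T') \<in> (prec P)\<^sup>+)"

definition dipole :: "'a picture \<Rightarrow> nat \<Rightarrow> nat \<Rightarrow> bool" where
  "dipole P T1 T2 \<longleftrightarrow> T1 \<in> trs P \<and> T2 \<in> trs P \<and> (T1, T2) \<in> (prec P)\<^sup>+ \<and>
     length (trbot P T1) = length (trtop P T2) \<and>
     (\<forall>j < length (trbot P T1). link P (TBot T1 j) = TTop T2 j) \<and>
     trtop P T1 = trbot P T2"

definition reduced :: "'a picture \<Rightarrow> bool" where
  "reduced P \<longleftrightarrow> \<not> (\<exists>T1 T2. dipole P T1 T2)"

text \<open>A cube: a reduced (w,*)-picture together with a set W of maximal transistors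
marked white (the others are shaded). Its dimension is card W.\<close>
definition is_cube :: "('a list \<times> 'a list) set \<Rightarrow> 'a list \<Rightarrow> 'a picture \<Rightarrow> nat set \<Rightarrow> bool" where
  "is_cube R w P W \<longleftrightarrow> wf_picture R P \<and> reduced P \<and> ptop P = w \<and>
     W \<subseteq> trs P \<and> (\<forall>T\<in>W. maximal_tr P T)"

text \<open>Deleting a maximal transistor T together with its bottom wires: the bottom wires
of T end at consecutive bottom-frame contacts a, ..., a + |bottom T| - 1; after deletion
the top wires of T end at the bottom frame in their place.\<close>
definition del_tr :: "'a picture \<Rightarrow> nat \<Rightarrow> 'a picture" where
  "del_tr P T =
    (let a = (case link P (TBot T 0) of FBot i \<Rightarrow> i | TTop _ _ \<Rightarrow> 0);
         lb = length (trbot P T); lt = length (trtop P T)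
     in P\<lparr> pbot := take a (pbot P) @ trtop P T @ drop (a + lb) (pbot P),
           trs := trs P - {T},
           link := (\<lambda>s. case link P s of
                      TTop t j \<Rightarrow> (if t = T then FBot (a + j) else TTop t j)
                    | FBot i \<Rightarrow> (if i < a then FBot i else FBot (i + lt - lb))) \<rparr>)"

fun map_src :: "(nat \<Rightarrow> nat) \<Rightarrow> src \<Rightarrow> src" where
  "map_src f (FTop i) = FTop i"
| "map_src f (TBot t j) = TBot (f t) j"

fun map_tgt :: "(nat \<Rightarrow> nat) \<Rightarrow> tgt \<Rightarrow> tgt" where
  "map_tgt f (TTop t j) = TTop (f t) j"
| "map_tgt f (FBot i) = FBot i"

text \<open>Equality of labelled cubes: isomorphism of marked pictures (renaming transistors,
preserving labels, frame, wiring and the set of white transistors).\<close>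
definition marked_iso :: "'a picture \<times> nat set \<Rightarrow> 'a picture \<times> nat set \<Rightarrow> bool" where
  "marked_iso PW QV \<longleftrightarrow>
     (case (PW, QV) of ((P, W), (Q, V)) \<Rightarrow>
       (\<exists>f. bij_betw f (trs P) (trs Q) \<and> f ` W = V \<and>
            ptop P = ptop Q \<and> pbot P = pbot Q \<and>
            (\<forall>t\<in>trs P. trtop Q (f t) = trtop P t \<and> trbot Q (f t) = trbot P t) \<and>
            (\<forall>s\<in>srcs P. link Q (map_src f s) = map_tgt f (link P s))))"

text \<open>Two edges are simple square equivalent if they are opposite sides of a square
(Q, {T1, T2}): the side with T2 kept (shaded) and the side with T2 deleted.\<close>
definition simple_square_equiv ::
  "('a list \<times> 'a list) set \<Rightarrow> 'a list \<Rightarrow> 'a picture \<times> nat set \<Rightarrow> 'a picture \<times> nat set \<Rightarrow> bool" where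
  "simple_square_equiv R w E1 E2 \<longleftrightarrow>
     (\<exists>Q T1 T2. T1 \<noteq> T2 \<and> is_cube R w Q {T1, T2} \<and>
        ((marked_iso E1 (Q, {T1}) \<and> marked_iso E2 (del_tr Q T2, {T1})) \<or>
         (marked_iso E1 (del_tr Q T2, {T1}) \<and> marked_iso E2 (Q, {T1}))))"

end

theory Submission
  imports Defs
begin

text \<open>For a maximal shaded transistor T of P, the edges (P, {t}) and (del_tr P T, {t})
are opposite sides of the square (P, {t, T}). Conversely, if the two sides of a square
(Q, {T1, T2}) are isomorphic to the edges (P, {t}) and (P', {t'}), the isomorphism P \<cong> Q
pulls T2 back to a transistor T of P which is maximal, different from t, and whose deletion
is carried to the deletion of T2, so that del_tr P T \<cong> P'.\<close>

definition picture_iso :: "(nat \<Rightarrow> nat) \<Rightarrow> 'a picture \<Rightarrow> 'a picture \<Rightarrow> bool" where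
  "picture_iso f P Q \<longleftrightarrow>
     bij_betw f (trs P) (trs Q) \<and> ptop P = ptop Q \<and> pbot P = pbot Q \<and>
     (\<forall>t\<in>trs P. trtop Q (f t) = trtop P t \<and> trbot Q (f t) = trbot P t) \<and>
     (\<forall>s\<in>srcs P. link Q (map_src f s) = map_tgt f (link P s))"

lemma marked_iso_iff: "marked_iso (P, W) (Q, V) \<longleftrightarrow> (\<exists>f. picture_iso f P Q \<and> f ` W = V)"
  unfolding marked_iso_def picture_iso_def by auto

text \<open>The map link is total on src, so a wire may point at a transistor outside trs P;
excluding this is what makes isomorphisms invertible.\<close>
definition wires_closed :: "'a picture \<Rightarrow> bool" where
  "wires_closed P \<longleftrightarrow> (\<forall>s\<in>srcs P. \<forall>t j. link P s = TTop t j \<longrightarrow> t \<in> trs P)"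

lemma wf_picture_wires_closed:
  assumes "wf_picture R P"
  shows "wires_closed P"
  unfolding wires_closed_def
proof (intro ballI allI impI)
  fix s t j
  assume "s \<in> srcs P" and "link P s = TTop t j"
  moreover have "bij_betw (link P) (srcs P) (tgts P)"
    using assms unfolding wf_picture_def by blast
  ultimately have "TTop t j \<in> tgts P" using bij_betwE by metis
  then show "t \<in> trs P" unfolding tgts_def by simp
qed

lemma trs_del_tr [simp]: "trs (del_tr P T) = trs P - {T}"
  unfolding del_tr_def Let_def by simp

lemma srcs_del_tr: "srcs (del_tr P T) = srcs P - range (TBot T)"
  unfolding srcs_def del_tr_def Let_def by auto

lemma wires_closed_del_tr: "wires_closed P \<Longrightarrow> wires_closed (del_tr P T)"
  unfolding wires_closed_def srcs_del_tr
  by (auto simp: del_tr_def Let_def split: tgt.splits if_splits)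

lemma map_src_comp: "map_src (g \<circ> f) s = map_src g (map_src f s)"
  by (cases s) auto

lemma map_tgt_comp: "map_tgt (g \<circ> f) x = map_tgt g (map_tgt f x)"
  by (cases x) auto

lemma map_src_id: "map_src id s = s"
  by (cases s) auto

lemma map_tgt_id: "map_tgt id x = x"
  by (cases x) auto

lemma map_src_in_srcs:
  assumes "picture_iso f P Q" and "s \<in> srcs P"
  shows "map_src f s \<in> srcs Q"
  using assms unfolding picture_iso_def srcs_def bij_betw_def by auto

lemma picture_iso_id: "picture_iso id P P"
  unfolding picture_iso_def by (simp add: map_src_id map_tgt_id)

lemma picture_iso_comp:
  assumes f: "picture_iso f P Q" and g: "picture_iso g Q S"
  shows "picture_iso (g \<circ> f) P S"
  unfolding picture_iso_def
proof (intro conjI ballI)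
  show "bij_betw (g \<circ> f) (trs P) (trs S)"
    using f g unfolding picture_iso_def by (blast intro: bij_betw_trans)
  show "ptop P = ptop S" "pbot P = pbot S"
    using f g unfolding picture_iso_def by simp_all
next
  fix t assume "t \<in> trs P"
  moreover have "f t \<in> trs Q"
    using f \<open>t \<in> trs P\<close> unfolding picture_iso_def bij_betw_def by blast
  ultimately show "trtop S ((g \<circ> f) t) = trtop P t" "trbot S ((g \<circ> f) t) = trbot P t"
    using f g unfolding picture_iso_def by auto
next
  fix s assume "s \<in> srcs P"
  moreover have "map_src f s \<in> srcs Q" using map_src_in_srcs[OF f] \<open>s \<in> srcs P\<close> .
  ultimately show "link S (map_src (g \<circ> f) s) = map_tgt (g \<circ> f) (link P s)"
    using f g unfolding picture_iso_def by (simp add: map_src_comp map_tgt_comp)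
qed

lemma picture_iso_inv:
  assumes f: "picture_iso f P Q" and closed: "wires_closed P"
  shows "picture_iso (inv_into (trs P) f) Q P"
proof -
  define g where "g = inv_into (trs P) f"
  have bij: "bij_betw f (trs P) (trs Q)" using f unfolding picture_iso_def by blast
  have g_bij: "bij_betw g (trs Q) (trs P)"
    unfolding g_def using bij by (rule bij_betw_inv_into)
  have fg: "f (g t) = t" if "t \<in> trs Q" for t
    unfolding g_def using bij that by (meson bij_betw_inv_into_right)
  have gf: "g (f t) = t" if "t \<in> trs P" for t
    unfolding g_def using bij that by (meson bij_betw_inv_into_left)
  have g_trs: "g t \<in> trs P" if "t \<in> trs Q" for t
    using g_bij that bij_betwE by blast
  have "picture_iso g Q P"
    unfolding picture_iso_def
  proof (intro conjI ballI)
    show "bij_betw g (trs Q) (trs P)" by (rule g_bij)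
    show "ptop Q = ptop P" "pbot Q = pbot P" using f unfolding picture_iso_def by simp_all
  next
    fix t assume "t \<in> trs Q"
    then show "trtop P (g t) = trtop Q t" "trbot P (g t) = trbot Q t"
      using f g_trs fg unfolding picture_iso_def by metis+
  next
    fix s assume s: "s \<in> srcs Q"
    have s': "map_src g s \<in> srcs P"
      using s g_trs fg f unfolding srcs_def picture_iso_def by force
    have "map_src f (map_src g s) = s"
      using s fg unfolding srcs_def by auto
    then have "link Q s = map_tgt f (link P (map_src g s))"
      using f s' unfolding picture_iso_def by metis
    moreover have "map_tgt g (map_tgt f (link P (map_src g s))) = link P (map_src g s)"
      using closed s' gf unfolding wires_closed_def by (cases "link P (map_src g s)") auto
    ultimately show "link P (map_src g s) = map_tgt g (link Q s)" by simp
  qed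
  then show ?thesis unfolding g_def .
qed

lemma marked_iso_refl: "marked_iso (P, W) (P, W)"
  unfolding marked_iso_iff using picture_iso_id by fastforce

lemma marked_iso_trans:
  "marked_iso (P, W) (Q, V) \<Longrightarrow> marked_iso (Q, V) (S, U) \<Longrightarrow> marked_iso (P, W) (S, U)"
  unfolding marked_iso_iff by (metis picture_iso_comp image_comp)

lemma marked_iso_sym:
  assumes iso: "marked_iso (P, W) (Q, V)" and "wires_closed P" and "W \<subseteq> trs P"
  shows "marked_iso (Q, V) (P, W)"
proof -
  obtain f where f: "picture_iso f P Q" and "f ` W = V"
    using iso unfolding marked_iso_iff by blast
  moreover have "inj_on f (trs P)" using f unfolding picture_iso_def bij_betw_def by blast
  ultimately have "inv_into (trs P) f ` V = W"
    using \<open>W \<subseteq> trs P\<close> by (auto simp: inv_into_f_f image_iff)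
  then show ?thesis
    unfolding marked_iso_iff using picture_iso_inv[OF f \<open>wires_closed P\<close>] by blast
qed

lemma picture_iso_prec:
  assumes f: "picture_iso f P Q" and "(a, b) \<in> prec P"
  shows "(f a, f b) \<in> prec Q"
proof -
  obtain j j' where ab: "a \<in> trs P" "b \<in> trs P" "j < length (trbot P a)"
      and link: "link P (TBot a j) = TTop b j'"
    using \<open>(a, b) \<in> prec P\<close> unfolding prec_def by blast
  then have "TBot a j \<in> srcs P" unfolding srcs_def by blast
  then show ?thesis
    using f ab link unfolding picture_iso_def prec_def bij_betw_def by force
qed

lemma trancl_map:
  assumes "(x, y) \<in> r\<^sup>+" and "\<And>a b. (a, b) \<in> r \<Longrightarrow> (h a, h b) \<in> s"
  shows "(h x, h y) \<in> s\<^sup>+"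
  using assms(1) by (induction rule: trancl_induct) (blast intro: assms(2) trancl_into_trancl)+

lemma picture_iso_reflects_maximal:
  assumes f: "picture_iso f P Q" and "T \<in> trs P" and "maximal_tr Q (f T)"
  shows "maximal_tr P T"
  using assms trancl_map[of T _ "prec P" f "prec Q"] picture_iso_prec[OF f]
  unfolding maximal_tr_def by blast

text \<open>del_tr locates the bottom wires of T through its first bottom wire, so this needs a
nonempty bottom label.\<close>
lemma picture_iso_del_tr:
  assumes f: "picture_iso f P Q" and closed: "wires_closed P"
    and T: "T \<in> trs P" "trbot P T \<noteq> []"
  shows "picture_iso f (del_tr P T) (del_tr Q (f T))"
proof -
  have bij: "bij_betw f (trs P) (trs Q)" and frame: "ptop P = ptop Q" "pbot P = pbot Q"
    and labels: "\<forall>t\<in>trs P. trtop Q (f t) = trtop P t \<and> trbot Q (f t) = trbot P t"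
    and wires: "\<forall>s\<in>srcs P. link Q (map_src f s) = map_tgt f (link P s)"
    using f unfolding picture_iso_def by blast+
  have inj: "inj_on f (trs P)" using bij unfolding bij_betw_def by blast
  define a where "a = (case link P (TBot T 0) of FBot i \<Rightarrow> i | TTop _ _ \<Rightarrow> 0)"
  have "TBot T 0 \<in> srcs P" using T unfolding srcs_def by auto
  then have "link Q (TBot (f T) 0) = map_tgt f (link P (TBot T 0))"
    using wires by force
  then have anchor: "(case link Q (TBot (f T) 0) of FBot i \<Rightarrow> i | TTop _ _ \<Rightarrow> 0) = a"
    unfolding a_def by (cases "link P (TBot T 0)") auto
  have top: "trtop Q (f T) = trtop P T" and bot: "trbot Q (f T) = trbot P T"
    using labels T by auto
  show ?thesis
    unfolding picture_iso_def
  proof (intro conjI ballI)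
    have "f ` (trs P - {T}) = trs Q - {f T}"
      using bij T unfolding bij_betw_def inj_on_def by auto
    then show "bij_betw f (trs (del_tr P T)) (trs (del_tr Q (f T)))"
      using inj by (simp add: bij_betw_def inj_on_diff)
    show "ptop (del_tr P T) = ptop (del_tr Q (f T))"
      using frame by (simp add: del_tr_def Let_def)
    show "pbot (del_tr P T) = pbot (del_tr Q (f T))"
      using frame top bot anchor by (simp add: del_tr_def Let_def a_def)
  next
    fix t assume "t \<in> trs (del_tr P T)"
    then show "trtop (del_tr Q (f T)) (f t) = trtop (del_tr P T) t"
      "trbot (del_tr Q (f T)) (f t) = trbot (del_tr P T) t"
      using labels by (auto simp: del_tr_def Let_def)
  next
    fix s assume "s \<in> srcs (del_tr P T)"
    then have s: "s \<in> srcs P" unfolding srcs_del_tr by blast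
    then have link: "link Q (map_src f s) = map_tgt f (link P s)"
      using wires by blast
    show "link (del_tr Q (f T)) (map_src f s) = map_tgt f (link (del_tr P T) s)"
    proof (cases "link P s")
      case (TTop t j)
      then have "t \<in> trs P" using closed s unfolding wires_closed_def by blast
      then have "f t = f T \<longleftrightarrow> t = T" using inj T unfolding inj_on_def by blast
      then show ?thesis using TTop link anchor top bot by (simp add: del_tr_def Let_def a_def)
    next
      case (FBot i)
      then show ?thesis using link anchor top bot by (simp add: del_tr_def Let_def a_def)
    qed
  qed
qed

lemma trbot_nonempty:
  assumes "semigroup_presentation R" and "wf_picture R P" and "T \<in> trs P"
  shows "trbot P T \<noteq> []"
  using assms unfolding semigroup_presentation_def wf_picture_def by fastforce

lemma square_side_deletes_maximal:
  assumes R: "semigroup_presentation R"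
    and P: "is_cube R w P {t}" and P': "is_cube R w P' {t'}"
    and Q: "is_cube R w Q {T1, T2}" and "T1 \<noteq> T2"
    and iso: "marked_iso (P, {t}) (Q, {T1})"
    and iso': "marked_iso (P', {t'}) (del_tr Q T2, {T1})"
  shows "\<exists>T. maximal_tr P T \<and> T \<noteq> t \<and> marked_iso (del_tr P T, {t}) (P', {t'})"
proof -
  have wf: "wf_picture R P" using P unfolding is_cube_def by blast
  obtain f where f: "picture_iso f P Q" and "f t = T1"
    using iso unfolding marked_iso_iff by auto
  have T2: "T2 \<in> trs Q" "maximal_tr Q T2" using Q unfolding is_cube_def by auto
  have bij: "bij_betw f (trs P) (trs Q)" using f unfolding picture_iso_def by blast
  define T where "T = inv_into (trs P) f T2"
  have T_trs: "T \<in> trs P"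
    unfolding T_def using bij_betw_apply[OF bij_betw_inv_into[OF bij] T2(1)] .
  have fT: "f T = T2"
    unfolding T_def using bij T2(1) by (rule bij_betw_inv_into_right)
  have "T \<noteq> t" using fT \<open>f t = T1\<close> \<open>T1 \<noteq> T2\<close> by auto
  have "maximal_tr P T"
    using picture_iso_reflects_maximal[OF f T_trs] fT T2(2) by simp
  have "picture_iso f (del_tr P T) (del_tr Q T2)"
    using picture_iso_del_tr[OF f wf_picture_wires_closed[OF wf] T_trs trbot_nonempty[OF R wf T_trs]]
    by (simp add: fT)
  then have "marked_iso (del_tr P T, {t}) (del_tr Q T2, {T1})"
    unfolding marked_iso_iff using \<open>f t = T1\<close> by auto
  moreover have "marked_iso (del_tr Q T2, {T1}) (P', {t'})"
    using P' by (intro marked_iso_sym[OF iso']) (auto simp: is_cube_def wf_picture_wires_closed)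
  ultimately have "marked_iso (del_tr P T, {t}) (P', {t'})"
    by (rule marked_iso_trans)
  with \<open>maximal_tr P T\<close> \<open>T \<noteq> t\<close> show ?thesis by blast
qed

lemma simple_square_equiv_sym:
  "simple_square_equiv R w E1 E2 \<Longrightarrow> simple_square_equiv R w E2 E1"
  unfolding simple_square_equiv_def by blast

lemma simple_square_equiv_deletion:
  assumes P: "is_cube R w P {t}" and T: "maximal_tr P T" "T \<noteq> t"
    and iso: "marked_iso (del_tr P T, {t}) (P', {t'})"
  shows "simple_square_equiv R w (P, {t}) (P', {t'})"
proof -
  have wf: "wf_picture R P" and t: "t \<in> trs P"
    using P unfolding is_cube_def by simp_all
  have square: "is_cube R w P {t, T}"
    using P T(1) unfolding is_cube_def maximal_tr_def by blast
  have "{t} \<subseteq> trs (del_tr P T)" using t T(2) by simp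
  then have "marked_iso (P', {t'}) (del_tr P T, {t})"
    using marked_iso_sym[OF iso wires_closed_del_tr[OF wf_picture_wires_closed[OF wf]]] by blast
  then show ?thesis
    unfolding simple_square_equiv_def using T(2) square
    by (intro exI[of _ P] exI[of _ t] exI[of _ T] conjI disjI1 marked_iso_refl) auto
qed

theorem lemma4p1:
  fixes R :: "('a list \<times> 'a list) set" and w :: "'a list"
    and P1 P2 :: "'a picture" and t1 t2 :: nat
  assumes "semigroup_presentation R" and "w \<noteq> []"
    and "is_cube R w P1 {t1}" and "is_cube R w P2 {t2}"
  shows "simple_square_equiv R w (P1, {t1}) (P2, {t2}) \<longleftrightarrow>
           (\<exists>T. maximal_tr P1 T \<and> T \<noteq> t1 \<and> marked_iso (del_tr P1 T, {t1}) (P2, {t2})) \<or>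
           (\<exists>T. maximal_tr P2 T \<and> T \<noteq> t2 \<and> marked_iso (del_tr P2 T, {t2}) (P1, {t1}))"
    (is "_ \<longleftrightarrow> ?del1 \<or> ?del2")
proof
  assume "simple_square_equiv R w (P1, {t1}) (P2, {t2})"
  then obtain Q T1 T2 where "T1 \<noteq> T2" "is_cube R w Q {T1, T2}"
    and "marked_iso (P1, {t1}) (Q, {T1}) \<and> marked_iso (P2, {t2}) (del_tr Q T2, {T1}) \<or>
         marked_iso (P1, {t1}) (del_tr Q T2, {T1}) \<and> marked_iso (P2, {t2}) (Q, {T1})"
    unfolding simple_square_equiv_def by blast
  then show "?del1 \<or> ?del2"
    using square_side_deletes_maximal[OF assms(1,3,4)] square_side_deletes_maximal[OF assms(1,4,3)]
    by blast
next
  assume "?del1 \<or> ?del2"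
  then show "simple_square_equiv R w (P1, {t1}) (P2, {t2})"
  proof
    assume ?del1
    then show ?thesis by (blast intro: simple_square_equiv_deletion[OF assms(3)])
  next
    assume ?del2
    then show ?thesis
      by (blast intro: simple_square_equiv_sym[OF simple_square_equiv_deletion[OF assms(4)]])
  qed
qed

end
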